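(* Let $p$ be a prime, $0<\alpha\le 1$, and let $S\subseteq\mathbb{Z}_p$ be such that for any distinct $x_1,x_2,y_1,y_2,z_1,z_2\in S$, $$\det\begin{pmatrix}x_1-y_1 & x_2-y_2\\ y_1-z_1 & y_2-z_2\end{pmatrix}\neq 0 \quad\text{in } \mathbb{Z}_p.$$ Then $$\mathcal{C}^{\mathrm{bsgs}}_\alpha(S)>(\alpha|S|/\sqrt3)^{2/3}.$$
   Context: For $L\subseteq\mathbb{Z}_p^2$ and $C\subseteq\mathbb{Z}_p$, $I(L,C)=\{x\in\mathbb{Z}_p\mid \exists (a,b)\in L,\ c\in C \text{ with } a\neq0 \text{ and } ax+b=c\}$. The baby-step giant-step $\alpha$-complexity $\mathcal{C}^{\mathrm{bsgs}}_\alpha(S)$ of $S\subseteq\mathbb{Z}_p$ is the smallest integer $m$ such that there exist $L\subseteq\mathbb{Z}_p^2$ and $C\subseteq\mathbb{Z}_p$ with $|L|=|C|=m$ and $|I(L,C)\cap S|\geq\alpha|S|$. *)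

theory Defs
  imports Complex_Main "HOL-Computational_Algebra.Primes"
begin

text \<open>Z_p is represented by the residues {0..<p} of int; arithmetic is taken mod p.\<close>

definition Zp :: "int \<Rightarrow> int set" where
  "Zp p = {0..<p}"

definition I_set :: "int \<Rightarrow> (int \<times> int) set \<Rightarrow> int set \<Rightarrow> int set" where
  "I_set p L C = {x \<in> Zp p. \<exists>a b c. (a, b) \<in> L \<and> c \<in> C \<and> a mod p \<noteq> 0 \<and>
                                  (a * x + b) mod p = c mod p}"

definition bsgs_complexity :: "int \<Rightarrow> real \<Rightarrow> int set \<Rightarrow> nat" where
  "bsgs_complexity p \<alpha> S = (LEAST m. \<exists>L C. L \<subseteq> Zp p \<times> Zp p \<and> C \<subseteq> Zp p \<and>
       card L = m \<and> card C = m \<and> real (card (I_set p L C \<inter> S)) \<ge> \<alpha> * real (card S))"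

end

theory Submission
  imports Defs "HOL-Number_Theory.Cong" "HOL-Analysis.Convex"
begin

(* Take an optimal pair (L, C) with |L| = |C| = m and choose for every covered point x of S
   one incidence (l, c) in L \<times> C with l(x) = c. Each l is an invertible affine map, so distinct
   points get distinct incidences and the covered points embed into a set P of incidences.
   Two distinct lines l, l' never share three values c1, c2, c3: their preimages x_i under l and
   y_i under l' would be six distinct points of S with y_i an affine function of x_i, so the
   points (x_i, y_i) would be collinear and the determinant of the hypothesis would vanish.
   Cauchy-Schwarz over the degrees of the values then gives
   |P|^2 <= m (|P| + 2 m (m - 1)) < 3 m^3, while |P| >= alpha |S|. *)

lemma affine_cong_cancel:
  fixes p a b x y :: int
  assumes "prime p" "\<not> p dvd a" "x \<in> Zp p" "y \<in> Zp p" "[a * x + b = a * y + b] (mod p)"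
  shows "x = y"
proof -
  have "coprime a p" using assms(1,2) prime_imp_coprime coprime_commute by blast
  then have "[x = y] (mod p)" using assms(5) by (simp add: cong_add_rcancel cong_mult_lcancel)
  then show ?thesis using assms(3,4) by (simp add: Zp_def cong_def)
qed

lemma collinear_det_cong_0:
  fixes p a b a' b' x1 x2 x3 y1 y2 y3 :: int
  assumes "prime p" "\<not> p dvd a" "\<not> p dvd a'"
    and h1: "[a * x1 + b = a' * y1 + b'] (mod p)"
    and h2: "[a * x2 + b = a' * y2 + b'] (mod p)"
    and h3: "[a * x3 + b = a' * y3 + b'] (mod p)"
  shows "[(x1 - x2) * (y2 - y3) - (y1 - y2) * (x2 - x3) = 0] (mod p)"
proof -
  have diff: "[a * (u - v) = a' * (u' - v')] (mod p)"
    if "[a * u + b = a' * u' + b'] (mod p)" "[a * v + b = a' * v' + b'] (mod p)" for u v u' v'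
    using cong_diff[OF that] by (simp add: algebra_simps)
  have "[a * (x1 - x2) * (a' * (y2 - y3)) = a' * (y1 - y2) * (a * (x2 - x3))] (mod p)"
    using cong_mult[OF diff[OF h1 h2] cong_sym[OF diff[OF h2 h3]]] .
  then have "p dvd a * (a' * ((x1 - x2) * (y2 - y3) - (y1 - y2) * (x2 - x3)))"
    by (simp add: cong_iff_dvd_diff algebra_simps)
  with assms(1-3) show ?thesis by (simp add: cong_0_iff prime_dvd_mult_iff)
qed

lemma card_eq_double_sum_of_bool:
  assumes "finite L" "finite C" "P \<subseteq> L \<times> C"
  shows "card P = (\<Sum>l\<in>L. \<Sum>c\<in>C. of_bool ((l, c) \<in> P))"
proof -
  have "card P = (\<Sum>q\<in>L \<times> C. of_bool (q \<in> P))"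
    using assms by (simp add: Int_absorb1 Int_def[symmetric])
  then show ?thesis by (simp add: sum.cartesian_product)
qed

lemma sum_sq_degree_eq_sum_codegree:
  assumes "finite L" "finite C"
  shows "(\<Sum>c\<in>C. card {l \<in> L. (l, c) \<in> P} ^ 2) =
    (\<Sum>l\<in>L. \<Sum>l'\<in>L. card {c \<in> C. (l, c) \<in> P \<and> (l', c) \<in> P})"
proof -
  have deg: "card {l \<in> L. (l, c) \<in> P} = (\<Sum>l\<in>L. of_bool ((l, c) \<in> P))" for c
    using assms(1) by (simp add: Collect_conj_eq)
  have "(\<Sum>c\<in>C. card {l \<in> L. (l, c) \<in> P} ^ 2) =
      (\<Sum>c\<in>C. \<Sum>l\<in>L. \<Sum>l'\<in>L. of_bool ((l, c) \<in> P \<and> (l', c) \<in> P))"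
    unfolding deg by (simp add: power2_eq_square sum_product of_bool_conj)
  also have "\<dots> = (\<Sum>l\<in>L. \<Sum>l'\<in>L. \<Sum>c\<in>C. of_bool ((l, c) \<in> P \<and> (l', c) \<in> P))"
    by (subst sum.swap) (rule sum.cong[OF refl], rule sum.swap)
  finally show ?thesis using assms by (simp add: Collect_conj_eq)
qed

lemma card_sq_le_codegree_bound:
  fixes P :: "('a \<times> 'b) set" and t :: nat
  assumes fin: "finite L" "finite C" and P: "P \<subseteq> L \<times> C"
    and codeg: "\<And>l l'. l \<in> L \<Longrightarrow> l' \<in> L \<Longrightarrow> l \<noteq> l' \<Longrightarrow>
      card {c \<in> C. (l, c) \<in> P \<and> (l', c) \<in> P} \<le> t"
  shows "card P ^ 2 \<le> card C * (card P + t * card L * (card L - 1))"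
proof -
  define deg where "deg c = card {l \<in> L. (l, c) \<in> P}" for c
  have card_P: "card P = (\<Sum>c\<in>C. deg c)"
    unfolding deg_def card_eq_double_sum_of_bool[OF fin P] using fin
    by (subst sum.swap) (simp add: Collect_conj_eq)
  have "(\<Sum>c\<in>C. deg c ^ 2) = (\<Sum>l\<in>L. \<Sum>l'\<in>L. card {c \<in> C. (l, c) \<in> P \<and> (l', c) \<in> P})"
    unfolding deg_def using fin by (rule sum_sq_degree_eq_sum_codegree)
  also have "\<dots> \<le> (\<Sum>l\<in>L. card {c \<in> C. (l, c) \<in> P} + t * (card L - 1))"
  proof (rule sum_mono)
    fix l assume l: "l \<in> L"
    have "(\<Sum>l'\<in>L - {l}. card {c \<in> C. (l, c) \<in> P \<and> (l', c) \<in> P}) \<le> (\<Sum>l'\<in>L - {l}. t)"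
      using codeg l by (intro sum_mono) auto
    then show "(\<Sum>l'\<in>L. card {c \<in> C. (l, c) \<in> P \<and> (l', c) \<in> P})
        \<le> card {c \<in> C. (l, c) \<in> P} + t * (card L - 1)"
      using fin l by (simp add: sum.remove mult.commute)
  qed
  also have "\<dots> = card P + t * card L * (card L - 1)"
    using fin by (simp add: sum.distrib card_eq_double_sum_of_bool[OF fin P] Collect_conj_eq)
  finally have sum_sq: "(\<Sum>c\<in>C. deg c ^ 2) \<le> card P + t * card L * (card L - 1)" .
  have "real (card P) ^ 2 \<le> (\<Sum>c\<in>C. real (deg c) ^ 2) * card C"
    unfolding card_P of_nat_sum by (rule sum_squared_le_sum_of_squares)
  then have "card P ^ 2 \<le> (\<Sum>c\<in>C. deg c ^ 2) * card C"
    by (simp flip: of_nat_power of_nat_mult of_nat_sum)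
  with sum_sq show ?thesis
    by (metis mult.commute mult_le_mono1 order_trans)
qed

definition incident :: "int \<Rightarrow> (int \<times> int) \<times> int \<Rightarrow> int \<Rightarrow> bool" where
  "incident p q x \<longleftrightarrow> \<not> p dvd fst (fst q) \<and> [fst (fst q) * x + snd (fst q) = snd q] (mod p)"

lemma I_set_incidence_choice:
  fixes p :: int and L :: "(int \<times> int) set" and C X :: "int set"
  assumes p: "prime p" and X: "X \<subseteq> I_set p L C"
  obtains G where "inj_on G X" "G ` X \<subseteq> L \<times> C" "\<And>x. x \<in> X \<Longrightarrow> incident p (G x) x"
proof -
  have "\<forall>x\<in>X. \<exists>q \<in> L \<times> C. incident p q x"
  proof
    fix x assume "x \<in> X"
    then obtain a b c where "(a, b) \<in> L" "c \<in> C" "a mod p \<noteq> 0" "(a * x + b) mod p = c mod p"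
      using X unfolding I_set_def by blast
    then show "\<exists>q \<in> L \<times> C. incident p q x"
      by (intro bexI[of _ "((a, b), c)"]) (simp_all add: incident_def cong_def dvd_eq_mod_eq_0)
  qed
  then obtain G where G: "\<forall>x\<in>X. G x \<in> L \<times> C \<and> incident p (G x) x"
    by (metis bchoice)
  have "X \<subseteq> Zp p" using X by (auto simp: I_set_def)
  have "inj_on G X"
  proof (rule inj_onI)
    fix x y assume "x \<in> X" "y \<in> X" "G x = G y"
    with G have "incident p (G x) x" "incident p (G x) y" by metis+
    then have "[fst (fst (G x)) * x + snd (fst (G x)) =
        fst (fst (G x)) * y + snd (fst (G x))] (mod p)"
      "\<not> p dvd fst (fst (G x))"
      unfolding incident_def by (meson cong_sym cong_trans)+
    with \<open>x \<in> X\<close> \<open>y \<in> X\<close> \<open>X \<subseteq> Zp p\<close> show "x = y" using affine_cong_cancel[OF p] by blast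
  qed
  with G that show thesis by blast
qed

lemma incidences_codegree_le_2:
  fixes p :: int and G :: "int \<Rightarrow> (int \<times> int) \<times> int" and C X S :: "int set"
  assumes p: "prime p" and G: "inj_on G X" "\<And>x. x \<in> X \<Longrightarrow> incident p (G x) x"
    and "X \<subseteq> S"
    and det: "\<And>x1 x2 y1 y2 z1 z2. distinct [x1, x2, y1, y2, z1, z2] \<Longrightarrow>
      {x1, x2, y1, y2, z1, z2} \<subseteq> S \<Longrightarrow>
      ((x1 - y1) * (y2 - z2) - (x2 - y2) * (y1 - z1)) mod p \<noteq> 0"
    and "l \<noteq> l'"
  shows "card {c \<in> C. (l, c) \<in> G ` X \<and> (l', c) \<in> G ` X} \<le> 2" (is "card ?common \<le> 2")
proof (rule ccontr)
  assume "\<not> ?thesis"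
  then have "3 \<le> card ?common" by simp
  then obtain B where "B \<subseteq> ?common" "card B = 3" by (rule obtain_subset_with_card_n)
  then obtain c1 c2 c3 where c: "c1 \<noteq> c2" "c1 \<noteq> c3" "c2 \<noteq> c3"
    and "{c1, c2, c3} \<subseteq> ?common"
    unfolding card_3_iff by blast
  then have common: "(l, c) \<in> G ` X \<and> (l', c) \<in> G ` X" if "c \<in> {c1, c2, c3}" for c
    using that by blast
  define F where "F = the_inv_into X G"
  have F: "F q \<in> X" "incident p q (F q)" if "q \<in> G ` X" for q
    using that G by (auto simp: F_def the_inv_into_f_f)
  have same_value: "[fst l * F (l, c) + snd l = fst l' * F (l', c) + snd l'] (mod p)"
    if "c \<in> {c1, c2, c3}" for c
    using F(2)[of "(l, c)"] F(2)[of "(l', c)"] common[OF that]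
    unfolding incident_def by (auto intro: cong_trans cong_sym)
  have nondvd: "\<not> p dvd fst l" "\<not> p dvd fst l'"
    using F(2)[of "(l, c1)"] F(2)[of "(l', c1)"] common[of c1] by (auto simp: incident_def)
  have "[(F (l, c1) - F (l, c2)) * (F (l', c2) - F (l', c3))
      - (F (l', c1) - F (l', c2)) * (F (l, c2) - F (l, c3)) = 0] (mod p)"
    using same_value by (intro collinear_det_cong_0[OF p nondvd]) auto
  moreover define qs where "qs = [(l, c1), (l', c1), (l, c2), (l', c2), (l, c3), (l', c3)]"
  have "distinct (map F qs)"
  proof -
    have "inj_on F (G ` X)"
      unfolding F_def using G(1) by (rule inj_on_the_inv_into)
    moreover have "set qs \<subseteq> G ` X" using common by (auto simp: qs_def)
    moreover have "distinct qs" using c \<open>l \<noteq> l'\<close> by (auto simp: qs_def)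
    ultimately show ?thesis by (simp add: distinct_map inj_on_subset)
  qed
  moreover have "set (map F qs) \<subseteq> S"
  proof -
    have "set (map F qs) \<subseteq> X" using F(1) common by (auto simp: qs_def)
    with \<open>X \<subseteq> S\<close> show ?thesis by blast
  qed
  ultimately show False
    using det[of "F (l, c1)" "F (l', c1)" "F (l, c2)" "F (l', c2)" "F (l, c3)" "F (l', c3)"]
    by (simp add: qs_def cong_def)
qed

lemma I_set_embeds_with_codegree_le_2:
  fixes p :: int and L :: "(int \<times> int) set" and C X S :: "int set"
  assumes p: "prime p" and X: "X \<subseteq> I_set p L C" "X \<subseteq> S"
    and det: "\<And>x1 x2 y1 y2 z1 z2. distinct [x1, x2, y1, y2, z1, z2] \<Longrightarrow>
      {x1, x2, y1, y2, z1, z2} \<subseteq> S \<Longrightarrow>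
      ((x1 - y1) * (y2 - z2) - (x2 - y2) * (y1 - z1)) mod p \<noteq> 0"
  obtains P where "P \<subseteq> L \<times> C" "card P = card X"
    "\<And>l l'. l \<in> L \<Longrightarrow> l' \<in> L \<Longrightarrow> l \<noteq> l' \<Longrightarrow>
      card {c \<in> C. (l, c) \<in> P \<and> (l', c) \<in> P} \<le> 2"
proof -
  obtain G where G: "inj_on G X" "G ` X \<subseteq> L \<times> C" "\<And>x. x \<in> X \<Longrightarrow> incident p (G x) x"
    using I_set_incidence_choice[OF p X(1)] by blast
  show thesis
  proof
    show "G ` X \<subseteq> L \<times> C" by (fact G(2))
    show "card (G ` X) = card X" using G(1) by (rule card_image)
    show "card {c \<in> C. (l, c) \<in> G ` X \<and> (l', c) \<in> G ` X} \<le> 2" if "l \<noteq> l'" for l l'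
      using incidences_codegree_le_2[OF p G(1,3) X(2) det that] by blast
  qed
qed

lemma bsgs_complexity_attained:
  fixes p :: int and \<alpha> :: real and S :: "int set"
  assumes "1 < p" "S \<subseteq> Zp p" "\<alpha> \<le> 1"
  obtains L C where "L \<subseteq> Zp p \<times> Zp p" "C \<subseteq> Zp p"
    "card L = bsgs_complexity p \<alpha> S" "card C = bsgs_complexity p \<alpha> S"
    "\<alpha> * real (card S) \<le> real (card (I_set p L C \<inter> S))"
proof -
  have "S \<subseteq> I_set p ({1} \<times> Zp p) (Zp p)"
    using assms(1,2) unfolding I_set_def by (force simp: Zp_def)
  then have "\<alpha> * real (card S) \<le> real (card (I_set p ({1} \<times> Zp p) (Zp p) \<inter> S))"
    using mult_right_mono[OF assms(3), of "real (card S)"] by (simp add: Int_absorb1)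
  moreover have "{1} \<times> Zp p \<subseteq> Zp p \<times> Zp p" using assms(1) by (auto simp: Zp_def)
  ultimately have "\<exists>m L C. L \<subseteq> Zp p \<times> Zp p \<and> C \<subseteq> Zp p \<and> card L = m \<and> card C = m \<and>
      real (card (I_set p L C \<inter> S)) \<ge> \<alpha> * real (card S)"
    by (intro exI[of _ "nat p"] exI[of _ "{1} \<times> Zp p"] exI[of _ "Zp p"])
      (simp add: card_cartesian_product Zp_def)
  then have "\<exists>L C. L \<subseteq> Zp p \<times> Zp p \<and> C \<subseteq> Zp p \<and>
      card L = bsgs_complexity p \<alpha> S \<and> card C = bsgs_complexity p \<alpha> S \<and>
      real (card (I_set p L C \<inter> S)) \<ge> \<alpha> * real (card S)"
    unfolding bsgs_complexity_def by (rule LeastI_ex)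
  with that show thesis by blast
qed

lemma sq_less_three_cube:
  fixes K m :: nat
  assumes "0 < K" "K \<le> m ^ 2" "K ^ 2 \<le> m * (K + 2 * m * (m - 1))"
  shows "K ^ 2 < 3 * m ^ 3"
proof -
  have "0 < m" using assms(1,2) by (auto intro: ccontr)
  have "m * K \<le> m ^ 3"
    using mult_le_mono2[OF assms(2), of m] by (simp add: power3_eq_cube power2_eq_square)
  moreover have "m * (2 * m * (m - 1)) < 2 * m ^ 3"
    using \<open>0 < m\<close> by (simp add: power3_eq_cube)
  ultimately show ?thesis using assms(3) by (simp add: algebra_simps)
qed

lemma powr_two_thirds_less:
  fixes N :: real and K m :: nat
  assumes "0 \<le> N" "N \<le> K" "K ^ 2 < 3 * m ^ 3"
  shows "(N / sqrt 3) powr (2 / 3) < m"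
proof -
  have "real (K ^ 2) < real (3 * m ^ 3)" using assms(3) by (simp only: of_nat_less_iff)
  moreover have "N ^ 2 \<le> real K ^ 2" using assms(2,1) by (rule power_mono)
  ultimately have N_sq: "N ^ 2 < 3 * real m ^ 3" by simp
  then have "0 < m" by (auto intro: ccontr)
  have "(real m powr (3 / 2)) ^ 2 = real m powr (real 2 * (3 / 2))"
    using \<open>0 < m\<close> by (simp add: powr_power)
  also have "\<dots> = real m ^ 3"
    using \<open>0 < m\<close> powr_realpow[of "real m" 3] by simp
  finally have "(N / sqrt 3) ^ 2 < (real m powr (3 / 2)) ^ 2"
    using N_sq by (simp add: power_divide)
  then have "N / sqrt 3 < real m powr (3 / 2)"
    by (rule power_less_imp_less_base) simp
  then have "(N / sqrt 3) powr (2 / 3) < (real m powr (3 / 2)) powr (2 / 3)"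
    using assms(1) by (intro powr_less_mono2) auto
  also have "\<dots> = m" by (simp add: powr_powr)
  finally show ?thesis .
qed

theorem theorem8:
  fixes p :: int and \<alpha> :: real and S :: "int set"
  assumes "prime p"
    and "0 < \<alpha>" and "\<alpha> \<le> 1"
    and "S \<subseteq> Zp p" and "S \<noteq> {}"
    and "\<And>x1 x2 y1 y2 z1 z2. distinct [x1, x2, y1, y2, z1, z2] \<Longrightarrow>
           {x1, x2, y1, y2, z1, z2} \<subseteq> S \<Longrightarrow>
           ((x1 - y1) * (y2 - z2) - (x2 - y2) * (y1 - z1)) mod p \<noteq> 0"
  shows "real (bsgs_complexity p \<alpha> S) > (\<alpha> * real (card S) / sqrt 3) powr (2/3)"
proof -
  define m where "m = bsgs_complexity p \<alpha> S"
  have "finite (Zp p)" by (simp add: Zp_def)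
  obtain L C where L: "L \<subseteq> Zp p \<times> Zp p" and C: "C \<subseteq> Zp p" and "card L = m" "card C = m"
    and covered: "\<alpha> * real (card S) \<le> real (card (I_set p L C \<inter> S))"
    using bsgs_complexity_attained[OF prime_gt_1_int[OF assms(1)] assms(4,3)] unfolding m_def .
  obtain P where P: "P \<subseteq> L \<times> C" "card P = card (I_set p L C \<inter> S)"
    and codeg: "\<And>l l'. l \<in> L \<Longrightarrow> l' \<in> L \<Longrightarrow> l \<noteq> l' \<Longrightarrow>
      card {c \<in> C. (l, c) \<in> P \<and> (l', c) \<in> P} \<le> 2"
    using I_set_embeds_with_codegree_le_2[OF assms(1) Int_lower1 Int_lower2 assms(6)] by blast
  have "finite L" "finite C"
    using L C \<open>finite (Zp p)\<close> by (auto intro: finite_subset)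
  have "0 < \<alpha> * real (card S)"
    using assms(2,4,5) \<open>finite (Zp p)\<close> by (simp add: card_gt_0_iff finite_subset)
  have "card P ^ 2 < 3 * m ^ 3"
  proof (rule sq_less_three_cube)
    show "0 < card P" using covered \<open>0 < \<alpha> * real (card S)\<close> P(2) by linarith
    show "card P \<le> m ^ 2"
      using card_mono[OF _ P(1)] \<open>finite L\<close> \<open>finite C\<close> \<open>card L = m\<close> \<open>card C = m\<close>
      by (simp add: card_cartesian_product power2_eq_square)
    show "card P ^ 2 \<le> m * (card P + 2 * m * (m - 1))"
      using card_sq_le_codegree_bound[OF \<open>finite L\<close> \<open>finite C\<close> P(1) codeg]
        \<open>card L = m\<close> \<open>card C = m\<close> by simp
  qed
  then show ?thesis
    unfolding m_def using covered P(2) \<open>0 < \<alpha> * real (card S)\<close>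
    by (intro powr_two_thirds_less) auto
qed

end
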